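(* Let $\mathcal{F}_{2P_2}$ and $\mathcal{F}_{P_5}$ be as defined in the context. Then $\{C_7,C_9,C_{11},\ldots\}\subsetneq\mathcal{F}_{2P_2}$ and $\{C_7,C_9,C_{11},\ldots\}\subsetneq\mathcal{F}_{P_5}$. In particular, both $\mathcal{F}_{2P_2}$ and $\mathcal{F}_{P_5}$ are infinite.
   Context: All graphs are finite and simple. $C_n$ is the cycle on $n$ vertices, $P_5$ the path on $5$ vertices, and $2P_2$ the disjoint union of two edges. A graph is $H$-free if it has no induced subgraph isomorphic to $H$; for a set $\mathcal{F}$ of graphs, a graph is $\mathcal{F}$-free if it is $H$-free for every $H\in\mathcal{F}$. A graph $G=(V,E)$ is probe $H$-free if there is an independent set $N$ of $G$ and a set $F\subseteq\binom{N}{2}$ such that $(V,E\cup F)$ is $H$-free. The class of probe $H$-free graphs is closed under vertex deletion, so there is a unique minimal set of graphs $\mathcal{F}_H$ (up to isomorphism) such that a graph is probe $H$-free if and only if it is $\mathcal{F}_H$-free (equivalently, $\mathcal{F}_H$ is the set of minimal forbidden induced subgraphs: graphs that are not probe $H$-free but all of whose proper induced subgraphs are). *)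

theory Defs
  imports Main
begin

type_synonym 'a graph = "'a set \<times> 'a set set"

definition is_graph :: "'a graph \<Rightarrow> bool" where
  "is_graph G \<longleftrightarrow> finite (fst G) \<and> (\<forall>e\<in>snd G. e \<subseteq> fst G \<and> card e = 2)"

definition induced :: "'a graph \<Rightarrow> 'a set \<Rightarrow> 'a graph" where
  "induced G S = (S, {e \<in> snd G. e \<subseteq> S})"

definition graph_iso :: "'a graph \<Rightarrow> 'b graph \<Rightarrow> bool" where
  "graph_iso G H \<longleftrightarrow> (\<exists>f. bij_betw f (fst G) (fst H) \<and>
     (\<forall>x\<in>fst G. \<forall>y\<in>fst G. {x, y} \<in> snd G \<longleftrightarrow> {f x, f y} \<in> snd H))"

definition H_free :: "'a graph \<Rightarrow> 'b graph \<Rightarrow> bool" where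
  "H_free G H \<longleftrightarrow> \<not> (\<exists>S \<subseteq> fst G. graph_iso (induced G S) H)"

definition independent :: "'a graph \<Rightarrow> 'a set \<Rightarrow> bool" where
  "independent G N \<longleftrightarrow> N \<subseteq> fst G \<and> (\<forall>x\<in>N. \<forall>y\<in>N. {x, y} \<notin> snd G)"

definition probe_free :: "'a graph \<Rightarrow> 'b graph \<Rightarrow> bool" where
  "probe_free G H \<longleftrightarrow> (\<exists>N F. independent G N \<and> F \<subseteq> {e. e \<subseteq> N \<and> card e = 2} \<and>
       H_free (fst G, snd G \<union> F) H)"

text \<open>Membership in the family F_H of minimal forbidden induced subgraphs
  (considered up to isomorphism; graphs represented on natural-number vertices).\<close>
definition min_forbidden_probe :: "'b graph \<Rightarrow> nat graph \<Rightarrow> bool" where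
  "min_forbidden_probe H G \<longleftrightarrow> is_graph G \<and> \<not> probe_free G H \<and>
     (\<forall>S. S \<subset> fst G \<longrightarrow> probe_free (induced G S) H)"

definition cycle :: "nat \<Rightarrow> nat graph" where
  "cycle n = ({0..<n}, {{i, (i + 1) mod n} | i. i < n})"

definition path5 :: "nat graph" where
  "path5 = ({0..<5}, {{i, i + 1} | i. i < 4})"

definition twoP2 :: "nat graph" where
  "twoP2 = ({0, 1, 2, 3}, {{0, 1}, {2, 3}})"

end

theory Submission
  imports Defs
begin

(*
  An independent set N of an odd cycle C_n misses two consecutive vertices a, a + 1. If the
  probe edges do not join a + 2 to a + 4, the window a, ..., a + 4 is an induced P5 of the
  probed graph; otherwise a, a + 1, a + 2, a + 4, a + 5 is one (n >= 7 keeps the ends of both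
  paths apart). Deleting a vertex of C_n leaves a path; completing one colour class of it to a
  clique gives a split graph, which has no induced 2P2 and hence no induced P5.

  The triangular prism with one subdivided rung is a second graph with both properties, and it
  is no cycle because it has a vertex of degree 3: every independent set meets one of three of
  its induced P5's in at most one vertex, so probe edges cannot touch that P5, while every
  vertex-deleted subgraph becomes 2P2-free after adding a single probe edge.

  Since 2P2 is an induced subgraph of P5, probe 2P2-freeness implies probe P5-freeness; so for
  both families it suffices that these graphs are not probe P5-free while all their
  vertex-deleted subgraphs are probe 2P2-free.
*)

definition induced_embedding :: "('b \<Rightarrow> 'a) \<Rightarrow> 'b graph \<Rightarrow> 'a graph \<Rightarrow> bool" where
  "induced_embedding g H G \<longleftrightarrow> inj_on g (fst H) \<and> g ` fst H \<subseteq> fst G \<and>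
     (\<forall>x\<in>fst H. \<forall>y\<in>fst H. {g x, g y} \<in> snd G \<longleftrightarrow> {x, y} \<in> snd H)"

lemma H_free_iff_no_induced_embedding: "H_free G H \<longleftrightarrow> (\<forall>g. \<not> induced_embedding g H G)"
proof
  assume free: "H_free G H"
  show "\<forall>g. \<not> induced_embedding g H G"
  proof (intro allI notI)
    fix g assume emb: "induced_embedding g H G"
    let ?S = "g ` fst H"
    have inj: "inj_on g (fst H)" and sub: "?S \<subseteq> fst G"
      using emb by (auto simp: induced_embedding_def)
    have "graph_iso (induced G ?S) H"
      unfolding graph_iso_def induced_def
    proof (intro exI[of _ "inv_into (fst H) g"] conjI ballI)
      show "bij_betw (inv_into (fst H) g) (fst (?S, {e \<in> snd G. e \<subseteq> ?S})) (fst H)"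
        using bij_betw_inv_into[of g "fst H" ?S] inj by (simp add: inj_on_imp_bij_betw)
    next
      fix a b assume "a \<in> fst (?S, {e \<in> snd G. e \<subseteq> ?S})" "b \<in> fst (?S, {e \<in> snd G. e \<subseteq> ?S})"
      then obtain x y where "x \<in> fst H" "y \<in> fst H" "a = g x" "b = g y" by auto
      then show "{a, b} \<in> snd (?S, {e \<in> snd G. e \<subseteq> ?S}) \<longleftrightarrow>
          {inv_into (fst H) g a, inv_into (fst H) g b} \<in> snd H"
        using emb inj by (auto simp: induced_embedding_def)
    qed
    then show False using free sub by (auto simp: H_free_def)
  qed
next
  assume no_emb: "\<forall>g. \<not> induced_embedding g H G"
  show "H_free G H"
    unfolding H_free_def
  proof
    assume "\<exists>S\<subseteq>fst G. graph_iso (induced G S) H"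
    then obtain S f where S: "S \<subseteq> fst G" and bij: "bij_betw f S (fst H)"
      and adj: "\<forall>a\<in>S. \<forall>b\<in>S. {a, b} \<in> snd G \<and> {a, b} \<subseteq> S \<longleftrightarrow> {f a, f b} \<in> snd H"
      unfolding graph_iso_def induced_def by auto
    let ?g = "inv_into S f"
    have bij': "bij_betw ?g (fst H) S" using bij_betw_inv_into[OF bij] .
    have "induced_embedding ?g H G"
      unfolding induced_embedding_def
    proof (intro conjI ballI)
      show "inj_on ?g (fst H)" using bij' by (simp add: bij_betw_def)
      show "?g ` fst H \<subseteq> fst G" using bij' S by (simp add: bij_betw_def)
    next
      fix x y assume "x \<in> fst H" "y \<in> fst H"
      moreover have "\<And>x. x \<in> fst H \<Longrightarrow> ?g x \<in> S \<and> f (?g x) = x"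
        using bij bij' by (meson bij_betwE bij_betw_inv_into_right)
      ultimately show "{?g x, ?g y} \<in> snd G \<longleftrightarrow> {x, y} \<in> snd H"
        using adj by fastforce
    qed
    then show False using no_emb by blast
  qed
qed

lemma induced_embedding_comp:
  assumes "induced_embedding g H G" and "induced_embedding h K H"
  shows "induced_embedding (g \<circ> h) K G"
  using assms unfolding induced_embedding_def
  by (auto simp: comp_inj_on inj_on_subset image_subset_iff)

lemma H_free_if_H_free_induced_subgraph:
  assumes "H_free G K" and "induced_embedding h K H"
  shows "H_free G H"
  using assms induced_embedding_comp unfolding H_free_iff_no_induced_embedding by blast

lemma induced_embedding_Un_edges:
  assumes "induced_embedding g H G" and "\<forall>x\<in>fst H. \<forall>y\<in>fst H. {g x, g y} \<notin> F"
  shows "induced_embedding g H (fst G, snd G \<union> F)"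
  using assms unfolding induced_embedding_def by auto

lemma probe_free_induced:
  assumes "probe_free G H" and "S \<subseteq> fst G"
  shows "probe_free (induced G S) H"
proof -
  obtain N F where N: "independent G N" and F: "F \<subseteq> {e. e \<subseteq> N \<and> card e = 2}"
    and free: "H_free (fst G, snd G \<union> F) H"
    using assms(1) unfolding probe_free_def by blast
  have "induced (fst (induced G S), snd (induced G S) \<union> {e \<in> F. e \<subseteq> S}) T =
      induced (fst G, snd G \<union> F) T" if "T \<subseteq> S" for T
    using that unfolding induced_def by auto
  then have "H_free (fst (induced G S), snd (induced G S) \<union> {e \<in> F. e \<subseteq> S}) H"
    using free assms(2) unfolding H_free_def by (auto simp: induced_def)
  moreover have "independent (induced G S) (N \<inter> S)"
    using N unfolding independent_def induced_def by auto
  moreover have "{e \<in> F. e \<subseteq> S} \<subseteq> {e. e \<subseteq> N \<inter> S \<and> card e = 2}"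
    using F by auto
  ultimately show ?thesis unfolding probe_free_def by blast
qed

lemma probe_free_if_probe_free_induced_subgraph:
  assumes "probe_free G K" and "induced_embedding h K H"
  shows "probe_free G H"
proof -
  obtain N F where "independent G N" "F \<subseteq> {e. e \<subseteq> N \<and> card e = 2}" "H_free (fst G, snd G \<union> F) K"
    using assms(1) unfolding probe_free_def by blast
  then show ?thesis
    using H_free_if_H_free_induced_subgraph[OF _ assms(2)] unfolding probe_free_def by blast
qed

lemma min_forbidden_probeI:
  assumes "is_graph G" and "\<not> probe_free G H"
    and "\<And>w. w \<in> fst G \<Longrightarrow> probe_free (induced G (fst G - {w})) H"
  shows "min_forbidden_probe H G"
  unfolding min_forbidden_probe_def
proof (intro conjI allI impI assms(1,2))
  fix S assume "S \<subset> fst G"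
  then obtain w where w: "w \<in> fst G" and S: "S \<subseteq> fst G - {w}" by blast
  have "induced (induced G (fst G - {w})) S = induced G S"
    using S by (auto simp: induced_def)
  moreover have "S \<subseteq> fst (induced G (fst G - {w}))"
    using S by (simp add: induced_def)
  ultimately show "probe_free (induced G S) H"
    using probe_free_induced[OF assms(3)[OF w]] by metis
qed

lemma probe_edgeD:
  assumes "F \<subseteq> {e. e \<subseteq> N \<and> card e = 2}" and "{x, y} \<in> F"
  shows "x \<in> N" and "y \<in> N" and "x \<noteq> y"
  using assms by auto

lemma H_free_twoP2I:
  assumes "\<And>a b c d. {a, b} \<in> snd G \<Longrightarrow> {c, d} \<in> snd G \<Longrightarrow>
      {a, c} \<in> snd G \<or> {a, d} \<in> snd G \<or> {b, c} \<in> snd G \<or> {b, d} \<in> snd G"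
  shows "H_free G twoP2"
proof -
  have "\<not> induced_embedding g twoP2 G" for g
  proof
    assume "induced_embedding g twoP2 G"
    then have adj: "{g i, g j} \<in> snd G \<longleftrightarrow> {i, j} \<in> snd twoP2" if "i \<in> fst twoP2" "j \<in> fst twoP2" for i j
      using that unfolding induced_embedding_def by blast
    have "{g 0, g 1} \<in> snd G" "{g 2, g 3} \<in> snd G"
      using adj[of 0 1] adj[of 2 3] by (simp_all add: twoP2_def)
    moreover have "{g 0, g 2} \<notin> snd G" "{g 0, g 3} \<notin> snd G" "{g 1, g 2} \<notin> snd G" "{g 1, g 3} \<notin> snd G"
      using adj[of 0 2] adj[of 0 3] adj[of 1 2] adj[of 1 3] by (simp_all add: twoP2_def doubleton_eq_iff)
    ultimately show False using assms by blast
  qed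
  then show ?thesis unfolding H_free_iff_no_induced_embedding by blast
qed

lemma H_free_twoP2_if_edges_joined:
  assumes "\<forall>e\<in>snd G. \<forall>e'\<in>snd G. \<exists>x\<in>e. \<exists>y\<in>e'. {x, y} \<in> snd G"
  shows "H_free G twoP2"
proof (rule H_free_twoP2I)
  fix a b c d assume "{a, b} \<in> snd G" "{c, d} \<in> snd G"
  then have "\<exists>x\<in>{a, b}. \<exists>y\<in>{c, d}. {x, y} \<in> snd G" using assms by blast
  then show "{a, c} \<in> snd G \<or> {a, d} \<in> snd G \<or> {b, c} \<in> snd G \<or> {b, d} \<in> snd G" by auto
qed

lemma probe_free_twoP2_if_independent_vertex_cover:
  assumes N: "independent G N" and cover: "\<And>x y. {x, y} \<in> snd G \<Longrightarrow> x \<in> N \<or> y \<in> N"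
  shows "probe_free G twoP2"
  unfolding probe_free_def
proof (intro exI conjI)
  let ?F = "{e. e \<subseteq> N \<and> card e = 2}"
  let ?E = "snd G \<union> ?F"
  show "H_free (fst G, ?E) twoP2"
  proof (rule H_free_twoP2I)
    fix a b c d assume ab: "{a, b} \<in> snd (fst G, ?E)" and cd: "{c, d} \<in> snd (fst G, ?E)"
    obtain x where x: "x \<in> {a, b}" "x \<in> N" using ab cover by auto
    obtain y where y: "y \<in> {c, d}" "y \<in> N" using cd cover by auto
    have "\<exists>u\<in>{a, b}. \<exists>v\<in>{c, d}. {u, v} \<in> ?E"
    proof (cases "x = y")
      case True
      then have "{c, d} = {x, if x = c then d else c}" using y by auto
      then show ?thesis using x cd by (metis insertCI snd_conv)
    next
      case False
      then show ?thesis using x y by auto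
    qed
    then show "{a, c} \<in> snd (fst G, ?E) \<or> {a, d} \<in> snd (fst G, ?E) \<or>
        {b, c} \<in> snd (fst G, ?E) \<or> {b, d} \<in> snd (fst G, ?E)"
      by auto
  qed
qed (use N in auto)

lemma probe_free_twoP2_add_edge:
  assumes "independent G {p, q}" and "p \<noteq> q"
    and "\<forall>e\<in>insert {p, q} (snd G). \<forall>e'\<in>insert {p, q} (snd G).
      \<exists>x\<in>e. \<exists>y\<in>e'. {x, y} \<in> insert {p, q} (snd G)"
  shows "probe_free G twoP2"
  unfolding probe_free_def
proof (intro exI conjI)
  show "{{p, q}} \<subseteq> {e. e \<subseteq> {p, q} \<and> card e = 2}" using assms(2) by simp
  show "H_free (fst G, snd G \<union> {{p, q}}) twoP2"
    using assms(3) by (intro H_free_twoP2_if_edges_joined) simp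
qed (rule assms(1))

lemma path5_explicit: "path5 = ({0..<5}, {{0, 1}, {1, 2}, {2, 3}, {3, 4}})"
  unfolding path5_def by (auto simp: numeral_eq_Suc less_Suc_eq)

lemma path5_edge_iff: "i < 5 \<Longrightarrow> j < 5 \<Longrightarrow> {i, j} \<in> snd path5 \<longleftrightarrow> i = Suc j \<or> j = Suc i"
  unfolding path5_def by (auto simp: doubleton_eq_iff)

lemma twoP2_induced_embedding_path5: "induced_embedding ((!) [0, 1, 3, 4]) twoP2 path5"
  unfolding path5_explicit twoP2_def by code_simp

lemma probe_free_path5_if_probe_free_twoP2: "probe_free G twoP2 \<Longrightarrow> probe_free G path5"
  using probe_free_if_probe_free_induced_subgraph twoP2_induced_embedding_path5 by blast

lemma induced_embedding_path5I:
  assumes "\<And>i. i < 5 \<Longrightarrow> x i \<in> fst G" and "\<And>i j. i < 5 \<Longrightarrow> j < 5 \<Longrightarrow> x i = x j \<Longrightarrow> i = j"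
    and "\<And>i j. i < 5 \<Longrightarrow> j < 5 \<Longrightarrow> {x i, x j} \<in> snd G \<longleftrightarrow> i = Suc j \<or> j = Suc i"
  shows "induced_embedding x path5 G"
proof -
  have V: "fst path5 = {..<5}" by (auto simp: path5_def)
  show ?thesis
    unfolding induced_embedding_def V using assms by (auto simp: path5_edge_iff inj_on_def)
qed

lemma mod_add_left_cancel_bounded:
  fixes b p q n :: nat
  assumes "p < q + n" and "q < p + n"
  shows "(b + p) mod n = (b + q) mod n \<longleftrightarrow> p = q"
proof
  have le: "p = q" if "p \<le> q" "q < p + n" "(b + p) mod n = (b + q) mod n" for p q
  proof -
    have "n dvd q - p" using that mod_eq_dvd_iff_nat[of "b + p" "b + q" n] by simp
    then show ?thesis using that nat_dvd_not_less[of "q - p" n] by linarith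
  qed
  show "(b + p) mod n = (b + q) mod n \<Longrightarrow> p = q"
    using le[of p q] le[of q p] assms by (cases "p \<le> q") auto
qed simp

lemma fst_cycle [simp]: "fst (cycle n) = {0..<n}"
  by (simp add: cycle_def)

lemma cycle_is_graph: "3 \<le> n \<Longrightarrow> is_graph (cycle n)"
  unfolding is_graph_def cycle_def
proof (auto)
  fix i assume "3 \<le> n" "i < n"
  then show "card {i, Suc i mod n} = 2"
    by (cases "Suc i < n") (auto simp: mod_Suc)
qed

lemma cycle_edge_iff:
  "u < n \<Longrightarrow> v < n \<Longrightarrow> {u, v} \<in> snd (cycle n) \<longleftrightarrow> v = (u + 1) mod n \<or> u = (v + 1) mod n"
  unfolding cycle_def by (auto simp: doubleton_eq_iff)

lemma cycle_edge_Suc_mod: "i < n \<Longrightarrow> {i, (i + 1) mod n} \<in> snd (cycle n)"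
  unfolding cycle_def by auto

lemma cycle_edge_window_iff:
  assumes "s + 2 \<le> t + n" and "t + 2 \<le> s + n"
  shows "{(b + s) mod n, (b + t) mod n} \<in> snd (cycle n) \<longleftrightarrow> s = Suc t \<or> t = Suc s"
proof -
  have "0 < n" using assms by linarith
  then have "{(b + s) mod n, (b + t) mod n} \<in> snd (cycle n) \<longleftrightarrow>
      (b + t) mod n = (b + Suc s) mod n \<or> (b + s) mod n = (b + Suc t) mod n"
    by (simp add: cycle_edge_iff mod_Suc_eq)
  also have "\<dots> \<longleftrightarrow> t = Suc s \<or> s = Suc t"
    using assms mod_add_left_cancel_bounded[of t "Suc s" n b] mod_add_left_cancel_bounded[of s "Suc t" n b]
    by auto
  finally show ?thesis by blast
qed

lemma cycle_window_induced_path5: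
  assumes "7 \<le> n"
  shows "induced_embedding (\<lambda>i. (a + i) mod n) path5 (cycle n)"
proof (rule induced_embedding_path5I)
  show "(a + i) mod n \<in> fst (cycle n)" for i using assms by simp
  show "i = j" if "i < 5" "j < 5" "(a + i) mod n = (a + j) mod n" for i j
    using that assms mod_add_left_cancel_bounded[of i j n a] by simp
  show "{(a + i) mod n, (a + j) mod n} \<in> snd (cycle n) \<longleftrightarrow> i = Suc j \<or> j = Suc i"
    if "i < 5" "j < 5" for i j
    using that assms by (simp add: cycle_edge_window_iff)
qed

lemma cycle_chord_induced_path5:
  assumes "7 \<le> n"
    and F: "\<And>s t. s \<in> {0, 1, 2, 4, 5} \<Longrightarrow> t \<in> {0, 1, 2, 4, 5} \<Longrightarrow>
      {(a + s) mod n, (a + t) mod n} \<in> F \<longleftrightarrow> {s, t} = {2, 4 :: nat}"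
  shows "induced_embedding (\<lambda>i. (a + [0, 1, 2, 4, 5] ! i) mod n) path5
    (fst (cycle n), snd (cycle n) \<union> F)"
proof -
  define v where "v s = (a + s) mod n" for s
  have v_edge: "{v s, v t} \<in> snd (cycle n) \<longleftrightarrow> s = Suc t \<or> t = Suc s" if "s \<le> 5" "t \<le> 5" for s t
    using that assms by (simp add: v_def cycle_edge_window_iff)
  have v_eq: "v s = v t \<longleftrightarrow> s = t" if "s \<le> 5" "t \<le> 5" for s t
    using that assms mod_add_left_cancel_bounded[of s t n a] by (simp add: v_def)
  have v_loop: "{v s} \<notin> snd (cycle n)" if "s \<le> 5" for s
    using v_edge[OF that that] by simp
  have v_F: "{v s, v t} \<in> F \<longleftrightarrow> {s, t} = {2, 4}"
    if "s \<in> {0, 1, 2, 4, 5}" "t \<in> {0, 1, 2, 4, 5}" for s t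
    using F[OF that] by (simp add: v_def)
  have v_F_loop: "{v s} \<notin> F" if "s \<in> {0, 1, 2, 4, 5}" for s
    using v_F[OF that that] by auto
  have cases5: "i < 5 \<longleftrightarrow> i = 0 \<or> i = 1 \<or> i = 2 \<or> i = 3 \<or> i = 4" for i :: nat by auto
  have "induced_embedding (\<lambda>i. v ([0, 1, 2, 4, 5] ! i)) path5 (fst (cycle n), snd (cycle n) \<union> F)"
  proof (rule induced_embedding_path5I)
    show "v ([0, 1, 2, 4, 5] ! i) \<in> fst (fst (cycle n), snd (cycle n) \<union> F)" for i
      using assms(1) by (simp add: v_def)
    show "i = j" if "i < 5" "j < 5" "v ([0, 1, 2, 4, 5] ! i) = v ([0, 1, 2, 4, 5] ! j)" for i j
      using that unfolding cases5 by (elim disjE) (simp_all add: v_eq)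
    show "{v ([0, 1, 2, 4, 5] ! i), v ([0, 1, 2, 4, 5] ! j)} \<in> snd (fst (cycle n), snd (cycle n) \<union> F)
        \<longleftrightarrow> i = Suc j \<or> j = Suc i" if "i < 5" "j < 5" for i j
      using that unfolding cases5
      by (elim disjE) (simp_all add: v_edge v_loop v_F v_F_loop doubleton_eq_iff)
  qed
  then show ?thesis by (simp add: v_def)
qed

lemma odd_cycle_independent_misses_edge:
  assumes "odd n" and N: "independent (cycle n) N"
  shows "\<exists>a<n. a \<notin> N \<and> (a + 1) mod n \<notin> N"
proof (rule ccontr)
  assume "\<not> ?thesis"
  moreover have "(a + 1) mod n \<notin> N" if "a < n" "a \<in> N" for a
    using N that cycle_edge_Suc_mod unfolding independent_def by blast
  ultimately have alternate: "(a + 1) mod n \<in> N \<longleftrightarrow> a \<notin> N" if "a < n" for a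
    using that by blast
  have parity: "i \<in> N \<longleftrightarrow> (0 \<in> N \<longleftrightarrow> even i)" if "i < n" for i
    using that
  proof (induction i)
    case (Suc i)
    then show ?case using alternate[of i] by simp
  qed simp
  have "n - 1 < n" "even (n - 1)" "(n - 1 + 1) mod n = 0" using \<open>odd n\<close> by (auto simp: odd_pos)
  then show False using parity[of "n - 1"] alternate[of "n - 1"] by simp
qed

lemma cycle_window_probe_edgeD:
  assumes "7 \<le> n" and N: "independent (cycle n) N" and F: "F \<subseteq> {e. e \<subseteq> N \<and> card e = 2}"
    and st: "{(a + s) mod n, (a + t) mod n} \<in> F" and "s \<le> 5" and "t \<le> 5"
  shows "(a + s) mod n \<in> N" and "(a + t) mod n \<in> N" and "s \<noteq> t" and "s \<noteq> Suc t" and "t \<noteq> Suc s"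
proof -
  show sN: "(a + s) mod n \<in> N" and tN: "(a + t) mod n \<in> N" and "s \<noteq> t"
    using probe_edgeD[OF F st] by auto
  have "{(a + s) mod n, (a + t) mod n} \<notin> snd (cycle n)"
    using N sN tN by (simp add: independent_def)
  then show "s \<noteq> Suc t" and "t \<noteq> Suc s"
    using assms(1,5,6) cycle_edge_window_iff[of s t n a] by auto
qed

lemma cycle_probe_window_induced_path5:
  assumes "7 \<le> n" and N: "independent (cycle n) N" and F: "F \<subseteq> {e. e \<subseteq> N \<and> card e = 2}"
    and "a mod n \<notin> N" and "(a + 1) mod n \<notin> N" and "{(a + 2) mod n, (a + 4) mod n} \<notin> F"
  shows "induced_embedding (\<lambda>i. (a + i) mod n) path5 (fst (cycle n), snd (cycle n) \<union> F)"
proof -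
  have "{(a + s) mod n, (a + t) mod n} \<notin> F" if "s \<in> fst path5" "t \<in> fst path5" for s t
  proof
    assume st: "{(a + s) mod n, (a + t) mod n} \<in> F"
    have "s < 5" "t < 5" using that by (simp_all add: path5_def)
    note probe = cycle_window_probe_edgeD[OF assms(1) N F st]
    have "s \<noteq> 0" "s \<noteq> 1" "t \<noteq> 0" "t \<noteq> 1"
      using probe(1,2) \<open>s < 5\<close> \<open>t < 5\<close> assms(4,5) by (metis add.right_neutral less_imp_le_nat)+
    then have "s = 2 \<and> t = 4 \<or> s = 4 \<and> t = 2"
      using probe(3-5) \<open>s < 5\<close> \<open>t < 5\<close> by linarith
    then show False using st assms(6) by (auto simp: insert_commute)
  qed
  then show ?thesis
    using induced_embedding_Un_edges cycle_window_induced_path5[OF assms(1)] by blast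
qed

lemma cycle_probe_chord_induced_path5:
  assumes "7 \<le> n" and N: "independent (cycle n) N" and F: "F \<subseteq> {e. e \<subseteq> N \<and> card e = 2}"
    and "a mod n \<notin> N" and "(a + 1) mod n \<notin> N" and chord: "{(a + 2) mod n, (a + 4) mod n} \<in> F"
  shows "induced_embedding (\<lambda>i. (a + [0, 1, 2, 4, 5] ! i) mod n) path5
    (fst (cycle n), snd (cycle n) \<union> F)"
proof (rule cycle_chord_induced_path5[OF assms(1)])
  have "(a + 2) mod n \<in> N" "(a + 4) mod n \<in> N"
    using cycle_window_probe_edgeD[OF assms(1) N F chord] by simp_all
  then have "(a + 3) mod n \<notin> N" "(a + 5) mod n \<notin> N"
    using N assms(1) cycle_edge_window_iff[of 2 3 n a] cycle_edge_window_iff[of 4 5 n a]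
    by (auto simp: independent_def)
  then have in_N: "s = 2 \<or> s = 4" if "s \<in> {0, 1, 2, 4, 5}" "(a + s) mod n \<in> N" for s
    using that assms(4,5) by auto
  fix s t :: nat assume s: "s \<in> {0, 1, 2, 4, 5}" and t: "t \<in> {0, 1, 2, 4, 5}"
  show "{(a + s) mod n, (a + t) mod n} \<in> F \<longleftrightarrow> {s, t} = {2, 4}"
  proof
    assume st: "{(a + s) mod n, (a + t) mod n} \<in> F"
    have "s \<le> 5" "t \<le> 5" using s t by auto
    with cycle_window_probe_edgeD[OF assms(1) N F st]
    show "{s, t} = {2, 4}" using in_N[OF s] in_N[OF t] by auto
  next
    assume "{s, t} = {2, 4}"
    then have "s = 2 \<and> t = 4 \<or> s = 4 \<and> t = 2" by (simp add: doubleton_eq_iff)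
    then show "{(a + s) mod n, (a + t) mod n} \<in> F"
      using chord by (auto simp: insert_commute)
  qed
qed

lemma odd_cycle_not_probe_free_path5:
  assumes "7 \<le> n" and "odd n"
  shows "\<not> probe_free (cycle n) path5"
  unfolding probe_free_def
proof (intro notI, elim exE conjE)
  fix N F assume N: "independent (cycle n) N" and F: "F \<subseteq> {e. e \<subseteq> N \<and> card e = 2}"
    and free: "H_free (fst (cycle n), snd (cycle n) \<union> F) path5"
  obtain a where "a < n" "a \<notin> N" "(a + 1) mod n \<notin> N"
    using odd_cycle_independent_misses_edge[OF \<open>odd n\<close> N] by blast
  then have "a mod n \<notin> N" "(a + 1) mod n \<notin> N" by simp_all
  then have "\<exists>x. induced_embedding x path5 (fst (cycle n), snd (cycle n) \<union> F)"
    using cycle_probe_window_induced_path5[OF assms(1) N F] cycle_probe_chord_induced_path5[OF assms(1) N F]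
    by blast
  then show False using free unfolding H_free_iff_no_induced_embedding by blast
qed

lemma cycle_delete_probe_free_twoP2:
  assumes "m < n"
  shows "probe_free (induced (cycle n) ({0..<n} - {m})) twoP2"
proof (rule probe_free_twoP2_if_independent_vertex_cover)
  let ?S = "{0..<n} - {m}"
  \<comment> \<open>forward distance from the deleted vertex m; its parity 2-colours the remaining path\<close>
  define d where "d i = (if m < i then i - m else n + i - m)" for i
  let ?N = "{i \<in> ?S. even (d i)}"
  have d_Suc: "d ((i + 1) mod n) = Suc (d i)" if "i \<in> ?S" "(i + 1) mod n \<in> ?S" for i
  proof (cases "i + 1 < n")
    case False
    then have n: "i + 1 = n" using that by auto
    moreover from n have "m \<noteq> 0" "m < i" using that assms by auto
    ultimately show ?thesis by (simp add: d_def)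
  qed (use that assms in \<open>auto simp: d_def\<close>)
  have parity: "even (d x) \<longleftrightarrow> odd (d y)" if "{x, y} \<in> snd (induced (cycle n) ?S)" for x y
  proof -
    have xy: "{x, y} \<in> snd (cycle n)" "x \<in> ?S" "y \<in> ?S" using that by (auto simp: induced_def)
    then obtain i where i: "i < n" "{x, y} = {i, (i + 1) mod n}" by (auto simp: cycle_def)
    then have "i \<in> ?S" "(i + 1) mod n \<in> ?S" using xy by (auto simp: doubleton_eq_iff)
    then show ?thesis using d_Suc[of i] i(2) by (auto simp: doubleton_eq_iff)
  qed
  show "independent (induced (cycle n) ?S) ?N"
    using parity by (auto simp: independent_def induced_def cycle_def)
  show "x \<in> ?N \<or> y \<in> ?N" if "{x, y} \<in> snd (induced (cycle n) ?S)" for x y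
    using that parity[OF that] by (auto simp: induced_def)
qed

lemma odd_cycle_min_forbidden_probe_path5:
  assumes "7 \<le> n" and "odd n"
  shows "min_forbidden_probe path5 (cycle n)"
proof (rule min_forbidden_probeI)
  show "is_graph (cycle n)" using assms by (simp add: cycle_is_graph)
  show "\<not> probe_free (cycle n) path5" using assms by (rule odd_cycle_not_probe_free_path5)
  show "probe_free (induced (cycle n) (fst (cycle n) - {w})) path5" if "w \<in> fst (cycle n)" for w
    using that by (simp add: cycle_delete_probe_free_twoP2 probe_free_path5_if_probe_free_twoP2)
qed

lemma odd_cycle_min_forbidden_probe_twoP2:
  assumes "7 \<le> n" and "odd n"
  shows "min_forbidden_probe twoP2 (cycle n)"
proof (rule min_forbidden_probeI)
  show "is_graph (cycle n)" using assms by (simp add: cycle_is_graph)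
  show "\<not> probe_free (cycle n) twoP2"
    using assms odd_cycle_not_probe_free_path5 probe_free_path5_if_probe_free_twoP2 by blast
  show "probe_free (induced (cycle n) (fst (cycle n) - {w})) twoP2" if "w \<in> fst (cycle n)" for w
    using that cycle_delete_probe_free_twoP2 by simp
qed

lemma not_graph_iso_cycle_if_degree_3:
  assumes "u \<in> fst G" "p \<in> fst G" "q \<in> fst G" "r \<in> fst G" and "distinct [p, q, r]"
    and "{u, p} \<in> snd G" "{u, q} \<in> snd G" "{u, r} \<in> snd G"
  shows "\<not> graph_iso G (cycle n)"
proof
  assume "graph_iso G (cycle n)"
  then obtain f where f: "bij_betw f (fst G) {0..<n}"
    and adj: "\<forall>x\<in>fst G. \<forall>y\<in>fst G. {x, y} \<in> snd G \<longleftrightarrow> {f x, f y} \<in> snd (cycle n)"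
    unfolding graph_iso_def by (auto simp: cycle_def)
  have lt: "f x < n" if "x \<in> fst G" for x using f that by (auto dest: bij_betwE)
  have nbr: "f y = (f u + 1) mod n \<or> (f y + 1) mod n = f u" if "y \<in> fst G" "{u, y} \<in> snd G" for y
    using that adj assms(1) lt cycle_edge_iff by metis
  have pred_inj: "x = y" if "x < n" "y < n" "(x + 1) mod n = (y + 1) mod n" for x y
    using that mod_add_left_cancel_bounded[of x y n 1] by (simp add: add.commute)
  have "f p \<noteq> f q" "f p \<noteq> f r" "f q \<noteq> f r"
    using f assms(2-5) unfolding bij_betw_def inj_on_def by auto
  then show False
    using nbr[of p] nbr[of q] nbr[of r] pred_inj lt assms by metis
qed

(* Triangles 0 1 2 and 3 4 5, joined by the rungs 1-4 and 2-5 and by the rung 0-3 subdivided by 6. *)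
definition subdivided_prism :: "nat graph" where
  "subdivided_prism = ({0..<7},
     {{0, 1}, {0, 2}, {1, 2}, {3, 4}, {3, 5}, {4, 5}, {1, 4}, {2, 5}, {0, 6}, {3, 6}})"

lemma subdivided_prism_is_graph: "is_graph subdivided_prism"
  by (simp add: is_graph_def subdivided_prism_def)

lemma subdivided_prism_not_graph_iso_cycle: "\<not> graph_iso subdivided_prism (cycle n)"
  by (rule not_graph_iso_cycle_if_degree_3[of 0 _ 1 2 6]) (simp_all add: subdivided_prism_def)

lemma subdivided_prism_induced_path5:
  "induced_embedding ((!) [1, 0, 6, 3, 5]) path5 subdivided_prism"
  "induced_embedding ((!) [2, 0, 6, 3, 4]) path5 subdivided_prism"
  "induced_embedding ((!) [1, 2, 5, 3, 6]) path5 subdivided_prism"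
  unfolding path5_explicit by code_simp+

lemma subdivided_prism_path5_avoiding:
  assumes "independent subdivided_prism N"
  obtains xs where "xs \<in> {[1, 0, 6, 3, 5], [2, 0, 6, 3, 4], [1, 2, 5, 3, 6]}"
    and "\<forall>x\<in>set xs. \<forall>y\<in>set xs. x \<in> N \<longrightarrow> y \<in> N \<longrightarrow> x = y"
proof -
  have edge: "{x, y} \<in> snd subdivided_prism \<Longrightarrow> x \<in> N \<Longrightarrow> y \<notin> N" for x y
    using assms by (auto simp: independent_def)
  have "0 \<in> N \<Longrightarrow> 1 \<notin> N" "0 \<in> N \<Longrightarrow> 2 \<notin> N" "1 \<in> N \<Longrightarrow> 2 \<notin> N"
    "3 \<in> N \<Longrightarrow> 4 \<notin> N" "3 \<in> N \<Longrightarrow> 5 \<notin> N" "4 \<in> N \<Longrightarrow> 5 \<notin> N"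
    "1 \<in> N \<Longrightarrow> 4 \<notin> N" "2 \<in> N \<Longrightarrow> 5 \<notin> N" "0 \<in> N \<Longrightarrow> 6 \<notin> N" "3 \<in> N \<Longrightarrow> 6 \<notin> N"
    using edge[of 0 1] edge[of 0 2] edge[of 1 2] edge[of 3 4] edge[of 3 5] edge[of 4 5]
      edge[of 1 4] edge[of 2 5] edge[of 0 6] edge[of 3 6]
    by (simp_all add: subdivided_prism_def)
  note indep = this
  then consider "6 \<notin> N" "0 \<in> N" | "6 \<notin> N" "1 \<in> N" | "6 \<notin> N" "0 \<notin> N" "1 \<notin> N"
    | "6 \<in> N" "1 \<in> N \<or> 5 \<in> N" | "6 \<in> N" "1 \<notin> N" "5 \<notin> N"
    by blast
  then show ?thesis
  proof cases
    case 1
    then show ?thesis using that[of "[1, 2, 5, 3, 6]"] indep by auto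
  next
    case 2
    then show ?thesis using that[of "[2, 0, 6, 3, 4]"] indep by auto
  next
    case 3
    then show ?thesis using that[of "[1, 0, 6, 3, 5]"] indep by auto
  next
    case 4
    then show ?thesis using that[of "[2, 0, 6, 3, 4]"] indep by auto
  next
    case 5
    then show ?thesis using that[of "[1, 0, 6, 3, 5]"] indep by auto
  qed
qed

lemma subdivided_prism_not_probe_free_path5: "\<not> probe_free subdivided_prism path5"
  unfolding probe_free_def
proof (intro notI, elim exE conjE)
  fix N F assume N: "independent subdivided_prism N" and F: "F \<subseteq> {e. e \<subseteq> N \<and> card e = 2}"
    and free: "H_free (fst subdivided_prism, snd subdivided_prism \<union> F) path5"
  obtain xs where xs: "xs \<in> {[1, 0, 6, 3, 5], [2, 0, 6, 3, 4], [1, 2, 5, 3, 6]}"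
    and one: "\<forall>x\<in>set xs. \<forall>y\<in>set xs. x \<in> N \<longrightarrow> y \<in> N \<longrightarrow> x = y"
    using subdivided_prism_path5_avoiding[OF N] by blast
  have "{xs ! i, xs ! j} \<notin> F" if "i \<in> fst path5" "j \<in> fst path5" for i j
  proof
    assume "{xs ! i, xs ! j} \<in> F"
    moreover have "length xs = 5" using xs by auto
    then have "xs ! i \<in> set xs" "xs ! j \<in> set xs" using that by (simp_all add: path5_def)
    ultimately show False using one probe_edgeD[OF F] by metis
  qed
  moreover have "induced_embedding ((!) xs) path5 subdivided_prism"
    using xs subdivided_prism_induced_path5 by blast
  ultimately have "induced_embedding ((!) xs) path5 (fst subdivided_prism, snd subdivided_prism \<union> F)"
    by (blast intro: induced_embedding_Un_edges)
  then show False using free unfolding H_free_iff_no_induced_embedding by blast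
qed

lemma subdivided_prism_delete_probe_free_twoP2:
  assumes "w \<in> fst subdivided_prism"
  shows "probe_free (induced subdivided_prism (fst subdivided_prism - {w})) twoP2"
proof -
  have "w = 0 \<or> w = 1 \<or> w = 2 \<or> w = 3 \<or> w = 4 \<or> w = 5 \<or> w = 6"
    using assms by (auto simp: subdivided_prism_def)
  then show ?thesis
  proof (elim disjE)
    assume w: "w = 0" show ?thesis unfolding w by (intro probe_free_twoP2_add_edge[of _ 1 3]; code_simp)
  next
    assume w: "w = 1" show ?thesis unfolding w by (intro probe_free_twoP2_add_edge[of _ 0 4]; code_simp)
  next
    assume w: "w = 2" show ?thesis unfolding w by (intro probe_free_twoP2_add_edge[of _ 0 5]; code_simp)
  next
    assume w: "w = 3" show ?thesis unfolding w by (intro probe_free_twoP2_add_edge[of _ 0 4]; code_simp)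
  next
    assume w: "w = 4" show ?thesis unfolding w by (intro probe_free_twoP2_add_edge[of _ 1 3]; code_simp)
  next
    assume w: "w = 5" show ?thesis unfolding w by (intro probe_free_twoP2_add_edge[of _ 2 3]; code_simp)
  next
    assume w: "w = 6" show ?thesis unfolding w by (intro probe_free_twoP2_add_edge[of _ 0 3]; code_simp)
  qed
qed

lemma subdivided_prism_min_forbidden_probe_path5: "min_forbidden_probe path5 subdivided_prism"
  by (rule min_forbidden_probeI)
    (simp_all add: subdivided_prism_is_graph subdivided_prism_not_probe_free_path5
      subdivided_prism_delete_probe_free_twoP2 probe_free_path5_if_probe_free_twoP2)

lemma subdivided_prism_min_forbidden_probe_twoP2: "min_forbidden_probe twoP2 subdivided_prism"
proof (rule min_forbidden_probeI)
  show "\<not> probe_free subdivided_prism twoP2"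
    using subdivided_prism_not_probe_free_path5 probe_free_path5_if_probe_free_twoP2 by blast
qed (simp_all add: subdivided_prism_is_graph subdivided_prism_delete_probe_free_twoP2)

theorem mainTheorem11:
  shows "(\<forall>k\<ge>3. min_forbidden_probe twoP2 (cycle (2 * k + 1)))
       \<and> (\<exists>G. min_forbidden_probe twoP2 G \<and> (\<forall>k\<ge>3. \<not> graph_iso G (cycle (2 * k + 1))))
       \<and> (\<forall>k\<ge>3. min_forbidden_probe path5 (cycle (2 * k + 1)))
       \<and> (\<exists>G. min_forbidden_probe path5 G \<and> (\<forall>k\<ge>3. \<not> graph_iso G (cycle (2 * k + 1))))"
proof -
  have cycles: "min_forbidden_probe twoP2 (cycle (2 * k + 1)) \<and> min_forbidden_probe path5 (cycle (2 * k + 1))"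
    if "3 \<le> k" for k :: nat
    using that odd_cycle_min_forbidden_probe_twoP2 odd_cycle_min_forbidden_probe_path5 by simp
  have "\<forall>k\<ge>3. \<not> graph_iso subdivided_prism (cycle (2 * k + 1))"
    using subdivided_prism_not_graph_iso_cycle by blast
  then show ?thesis
    using cycles subdivided_prism_min_forbidden_probe_twoP2 subdivided_prism_min_forbidden_probe_path5
    by blast
qed

end
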